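(* Let $(S,+)$ be an infinite semigroup which is left weakly cancellative and has no idempotent element. Let $A\subseteq S$ be an IP set. Then $A$ can be partitioned into countably infinitely many pairwise disjoint sets, each of which is an IP set in $S$.
   Context: A semigroup $(S,+)$ is left weakly cancellative if for all $a,b\in S$ the set $\{x\in S: a+x=b\}$ is finite. An element $e$ is idempotent if $e+e=e$. For a sequence $\langle x_n\rangle_{n=1}^\infty$ in $S$, $\mathrm{FS}(\langle x_n\rangle_{n=1}^\infty)=\{\sum_{n\in H}x_n : H\text{ a nonempty finite subset of }\mathbb{N}\}$, where sums are taken in increasing order of indices. A set $A\subseteq S$ is an IP set if there is a sequence $\langle x_n\rangle_{n=1}^\infty$ in $S$ with $\mathrm{FS}(\langle x_n\rangle_{n=1}^\infty)\subseteq A$. *)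

theory Defs
  imports Main
begin

fun seqsum :: "(nat \<Rightarrow> 'a::semigroup_add) \<Rightarrow> nat list \<Rightarrow> 'a" where
  "seqsum x [h] = x h"
| "seqsum x (h # h' # hs) = x h + seqsum x (h' # hs)"

definition FS :: "(nat \<Rightarrow> 'a::semigroup_add) \<Rightarrow> 'a set" where
  "FS x = {seqsum x (sorted_list_of_set H) | H. finite H \<and> H \<noteq> {}}"

definition IP_set :: "'a::semigroup_add set \<Rightarrow> bool" where
  "IP_set A \<longleftrightarrow> (\<exists>x. FS x \<subseteq> A)"

definition left_weakly_cancellative :: "'a::semigroup_add itself \<Rightarrow> bool" where
  "left_weakly_cancellative _ \<longleftrightarrow> (\<forall>a b::'a. finite {x. a + x = b})"

end

theory Submission
  imports Defs "HOL-Library.Nat_Bijection"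
begin

(* Fix x with FS(x) \<subseteq> A. Choose finite blocks H_0 < H_1 < ... of indices one at a time so
   that the sum of x over H_F = \<Union>_{s \<in> F} H_s never coincides with a sum over H_G when
   max F \<noteq> max G. When H_t is chosen, weak left cancellativity leaves only finitely many forbidden
   values for its sum, while infinitely many values are available beyond the earlier blocks,
   because without idempotents the multiples of an element are pairwise distinct. Splitting the
   block indices into infinitely many disjoint infinite sequences (via prod_encode) gives
   infinitely many sum subsystems of x whose FS-sets are disjoint subsets of A; what remains of A
   is added to the first of them. *)

(* Unspecified on the empty set, since seqsum is. *)
definition ordered_sum :: "(nat \<Rightarrow> 'a::semigroup_add) \<Rightarrow> nat set \<Rightarrow> 'a" where
  "ordered_sum x H = seqsum x (sorted_list_of_set H)"

lemma FS_eq_ordered_sums: "FS x = {ordered_sum x H | H. finite H \<and> H \<noteq> {}}"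
  by (simp add: FS_def ordered_sum_def)

lemma ordered_sum_singleton [simp]: "ordered_sum x {a} = x a"
  by (simp add: ordered_sum_def)

lemma seqsum_Cons: "xs \<noteq> [] \<Longrightarrow> seqsum x (a # xs) = x a + seqsum x xs"
  by (cases xs) auto

lemma seqsum_append:
  "xs \<noteq> [] \<Longrightarrow> ys \<noteq> [] \<Longrightarrow> seqsum x (xs @ ys) = seqsum x xs + seqsum x ys"
proof (induction xs)
  case Nil
  then show ?case by simp
next
  case (Cons a xs)
  then show ?case by (cases "xs = []") (auto simp: seqsum_Cons add.assoc)
qed

lemma sorted_list_of_set_Un_less:
  fixes A B :: "'a::linorder set"
  assumes "finite A" "finite B" "\<forall>a\<in>A. \<forall>b\<in>B. a < b"
  shows "sorted_list_of_set (A \<union> B) = sorted_list_of_set A @ sorted_list_of_set B"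
  using assms by (intro sorted_distinct_set_unique) (auto simp: sorted_append less_imp_le)

lemma ordered_sum_Un_less:
  assumes "finite A" "A \<noteq> {}" "finite B" "B \<noteq> {}" "\<forall>a\<in>A. \<forall>b\<in>B. a < b"
  shows "ordered_sum x (A \<union> B) = ordered_sum x A + ordered_sum x B"
  using assms by (simp add: ordered_sum_def sorted_list_of_set_Un_less seqsum_append)

definition block_sequence :: "(nat \<Rightarrow> nat set) \<Rightarrow> bool" where
  "block_sequence H \<longleftrightarrow> (\<forall>t. finite (H t) \<and> H t \<noteq> {}) \<and>
     (\<forall>s t. s < t \<longrightarrow> (\<forall>a\<in>H s. \<forall>b\<in>H t. a < b))"

lemma block_sequenceD:
  assumes "block_sequence H"
  shows "finite (H t)" and "H t \<noteq> {}" and "s < t \<Longrightarrow> a \<in> H s \<Longrightarrow> b \<in> H t \<Longrightarrow> a < b"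
  using assms by (auto simp: block_sequence_def)

lemma block_sequence_comp_strict_mono:
  "block_sequence H \<Longrightarrow> strict_mono e \<Longrightarrow> block_sequence (\<lambda>n. H (e n))"
  unfolding block_sequence_def strict_mono_def by blast

lemma seqsum_blocks:
  assumes "block_sequence H" "sorted_wrt (<) ns" "ns \<noteq> []"
  shows "seqsum (\<lambda>n. ordered_sum x (H n)) ns = ordered_sum x (\<Union>(H ` set ns))"
  using assms(2,3)
proof (induction ns)
  case Nil
  then show ?case by simp
next
  case (Cons n ns)
  show ?case
  proof (cases "ns = []")
    case True
    then show ?thesis by simp
  next
    case False
    have "seqsum (\<lambda>n. ordered_sum x (H n)) (n # ns) = ordered_sum x (H n) + ordered_sum x (\<Union>(H ` set ns))"
      using Cons False by (simp add: seqsum_Cons)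
    also have "\<dots> = ordered_sum x (H n \<union> \<Union>(H ` set ns))"
      using Cons.prems False block_sequenceD[OF assms(1)]
      by (intro ordered_sum_Un_less[symmetric]) auto
    finally show ?thesis by simp
  qed
qed

lemma ordered_sum_blocks:
  assumes "block_sequence H" "finite G" "G \<noteq> {}"
  shows "ordered_sum (\<lambda>n. ordered_sum x (H n)) G = ordered_sum x (\<Union>(H ` G))"
  using seqsum_blocks[OF assms(1), of "sorted_list_of_set G"] assms(2,3)
  by (simp add: ordered_sum_def)

lemma FS_block_sums:
  assumes "block_sequence H"
  shows "FS (\<lambda>n. ordered_sum x (H n)) = {ordered_sum x (\<Union>(H ` G)) | G. finite G \<and> G \<noteq> {}}"
  unfolding FS_eq_ordered_sums setcompr_eq_image
  using ordered_sum_blocks[OF assms] by (intro image_cong) auto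

lemma FS_block_sums_subset:
  assumes "block_sequence H"
  shows "FS (\<lambda>n. ordered_sum x (H n)) \<subseteq> FS x"
  unfolding FS_block_sums[OF assms] FS_eq_ordered_sums
  using block_sequenceD(1,2)[OF assms] by blast

(* suc_mult k v is the (k+1)-fold sum v + ... + v: there is no zero in a semigroup. *)
fun suc_mult :: "nat \<Rightarrow> 'a::semigroup_add \<Rightarrow> 'a" where
  "suc_mult 0 v = v"
| "suc_mult (Suc k) v = v + suc_mult k v"

lemma suc_mult_add: "suc_mult a v + suc_mult b v = suc_mult (a + b + 1) v"
  by (induction a) (auto simp: add.assoc)

lemma suc_mult_periodic:
  assumes "suc_mult k v = suc_mult (k + p) v" "k \<le> m"
  shows "suc_mult (m + q * p) v = suc_mult m v"
proof -
  have shift: "suc_mult (n + p) v = suc_mult n v" if "k \<le> n" for n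
    using that
  proof (induction n rule: dec_induct)
    case base
    then show ?case using assms(1) by simp
  next
    case (step n)
    then show ?case by simp
  qed
  show ?thesis
  proof (induction q)
    case 0
    then show ?case by simp
  next
    case (Suc q)
    have "suc_mult (m + Suc q * p) v = suc_mult ((m + q * p) + p) v"
      by (simp add: algebra_simps)
    also have "\<dots> = suc_mult (m + q * p) v"
      using shift assms(2) by simp
    finally show ?case using Suc.IH by simp
  qed
qed

lemma inj_suc_mult:
  fixes v :: "'a::semigroup_add"
  assumes noid: "\<forall>e::'a. e + e \<noteq> e"
  shows "inj (\<lambda>k. suc_mult k v)"
proof (rule linorder_injI)
  \<comment> \<open>A repetition makes the multiples periodic from k on, with some period p; the n-th
      multiple with n + 1 = (k + 1) p is then idempotent.\<close>
  fix k l :: nat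
  assume "k < l"
  show "suc_mult k v \<noteq> suc_mult l v"
  proof
    assume eq: "suc_mult k v = suc_mult l v"
    define p where "p = l - k"
    define n where "n = (k + 1) * p - 1"
    have "p \<ge> 1" using \<open>k < l\<close> by (simp add: p_def)
    moreover have "k \<le> k * p" "(k + 1) * p = k * p + p" using \<open>p \<ge> 1\<close> by simp_all
    ultimately have n: "k \<le> n" "n + 1 = (k + 1) * p"
      unfolding n_def by arith+
    have "suc_mult n v + suc_mult n v = suc_mult (n + (k + 1) * p) v"
      using suc_mult_add[of n v n] n(2) by (simp only: add.assoc)
    also have "\<dots> = suc_mult n v"
      using suc_mult_periodic[of k v p n "k + 1"] eq \<open>k < l\<close> n(1) by (simp add: p_def)
    finally show False using noid by blast
  qed
qed

lemma seqsum_const: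
  "xs \<noteq> [] \<Longrightarrow> \<forall>h\<in>set xs. x h = v \<Longrightarrow> seqsum x xs = suc_mult (length xs - 1) v"
proof (induction xs)
  case Nil
  then show ?case by simp
next
  case (Cons a xs)
  then show ?case by (cases xs) (auto simp: seqsum_Cons)
qed

lemma ordered_sum_const:
  "finite H \<Longrightarrow> H \<noteq> {} \<Longrightarrow> \<forall>h\<in>H. x h = v \<Longrightarrow> ordered_sum x H = suc_mult (card H - 1) v"
  using seqsum_const[of "sorted_list_of_set H" x v] by (simp add: ordered_sum_def)

lemma infinite_tail_sums:
  fixes x :: "nat \<Rightarrow> 'a::semigroup_add"
  assumes noid: "\<forall>e::'a. e + e \<noteq> e"
  shows "infinite {ordered_sum x H | H. finite H \<and> H \<noteq> {} \<and> (\<forall>h\<in>H. M < h)}"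
    (is "infinite ?C")
proof
  assume fin: "finite ?C"
  have "x ` {M<..} \<subseteq> ?C"
  proof
    fix y assume "y \<in> x ` {M<..}"
    then obtain n where "M < n" "y = ordered_sum x {n}" by auto
    then show "y \<in> ?C" by blast
  qed
  then have "finite (x ` {M<..})" using fin finite_subset by blast
  then obtain n0 where n0: "infinite {n \<in> {M<..}. x n = x n0}"
    using pigeonhole_infinite[of "{M<..}" x] infinite_Ioi[of M] by auto
  have "range (\<lambda>k. suc_mult k (x n0)) \<subseteq> ?C"
  proof
    fix y assume "y \<in> range (\<lambda>k. suc_mult k (x n0))"
    then obtain k where k: "y = suc_mult k (x n0)" by blast
    obtain H where H: "finite H" "card H = Suc k" "H \<subseteq> {n \<in> {M<..}. x n = x n0}"
      using infinite_arbitrarily_large[OF n0] by blast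
    then have "H \<noteq> {}" "\<forall>h\<in>H. x h = x n0" by auto
    then have "y = ordered_sum x H"
      using H k ordered_sum_const[of H x "x n0"] by simp
    then show "y \<in> ?C" using H \<open>H \<noteq> {}\<close> by blast
  qed
  then have "finite (range (\<lambda>k. suc_mult k (x n0)))" using fin finite_subset by blast
  then show False using finite_imageD[OF _ inj_suc_mult[OF noid]] by simp
qed

definition admissible_block ::
    "(nat \<Rightarrow> 'a::semigroup_add) \<Rightarrow> (nat \<Rightarrow> nat set) \<Rightarrow> nat \<Rightarrow> nat set \<Rightarrow> bool" where
  "admissible_block x H t B \<longleftrightarrow> finite B \<and> B \<noteq> {} \<and> (\<forall>s<t. \<forall>a\<in>H s. \<forall>b\<in>B. a < b) \<and>
     (\<forall>F G. F \<subseteq> {..<t} \<longrightarrow> G \<subseteq> {..<t} \<longrightarrow> G \<noteq> {} \<longrightarrow>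
        ordered_sum x (\<Union>(H ` F) \<union> B) \<noteq> ordered_sum x (\<Union>(H ` G)))"

lemma admissible_block_exists:
  fixes x :: "nat \<Rightarrow> 'a::semigroup_add"
  assumes wlc: "left_weakly_cancellative TYPE('a)"
    and noid: "\<forall>e::'a. e + e \<noteq> e"
    and prev: "\<forall>s<t. finite (H s) \<and> H s \<noteq> {}"
  shows "\<exists>B. admissible_block x H t B"
proof -
  have "finite (\<Union>(H ` {..<t}))"
    using prev by simp
  then obtain M where M: "\<forall>a\<in>\<Union>(H ` {..<t}). a \<le> M"
    using finite_nat_set_iff_bounded_le by blast
  \<comment> \<open>All sums of the new block that would create a coincidence; finite by weak cancellativity.\<close>
  define E where "E = (\<Union>F\<in>Pow {..<t}. \<Union>G\<in>Pow {..<t}.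
     {ordered_sum x (\<Union>(H ` G))} \<union> {v. ordered_sum x (\<Union>(H ` F)) + v = ordered_sum x (\<Union>(H ` G))})"
  have "finite E"
    using wlc unfolding E_def left_weakly_cancellative_def by simp
  then have "\<not> {ordered_sum x B | B. finite B \<and> B \<noteq> {} \<and> (\<forall>b\<in>B. M < b)} \<subseteq> E"
    using infinite_tail_sums[OF noid, of x M] finite_subset by blast
  then obtain B where B: "finite B" "B \<noteq> {}" "\<forall>b\<in>B. M < b" "ordered_sum x B \<notin> E"
    by blast
  have below: "\<forall>a\<in>\<Union>(H ` {..<t}). \<forall>b\<in>B. a < b"
    using M B(3) by (meson le_less_trans)
  have bad: "ordered_sum x (\<Union>(H ` G)) \<in> E"
    "{v. ordered_sum x (\<Union>(H ` F)) + v = ordered_sum x (\<Union>(H ` G))} \<subseteq> E"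
    if "F \<subseteq> {..<t}" "G \<subseteq> {..<t}" for F G
    using that unfolding E_def by blast+
  have sep: "ordered_sum x (\<Union>(H ` F) \<union> B) \<noteq> ordered_sum x (\<Union>(H ` G))"
    if F: "F \<subseteq> {..<t}" and G: "G \<subseteq> {..<t}" for F G
  proof (cases "\<Union>(H ` F) = {}")
    case True
    then show ?thesis using B(4) bad(1)[OF F G] by auto
  next
    case False
    have "ordered_sum x (\<Union>(H ` F) \<union> B) = ordered_sum x (\<Union>(H ` F)) + ordered_sum x B"
    proof (rule ordered_sum_Un_less)
      show "finite (\<Union>(H ` F))"
        using F prev finite_subset[OF F] by (simp add: subset_iff)
      show "\<forall>a\<in>\<Union>(H ` F). \<forall>b\<in>B. a < b"
        using F below by blast
    qed (use False B in auto)
    then show ?thesis using B(4) bad(2)[OF F G] by auto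
  qed
  show ?thesis
    unfolding admissible_block_def using B(1,2) below sep by auto
qed

lemma admissible_blocks_exist:
  fixes x :: "nat \<Rightarrow> 'a::semigroup_add"
  assumes wlc: "left_weakly_cancellative TYPE('a)"
    and noid: "\<forall>e::'a. e + e \<noteq> e"
  shows "\<exists>H. \<forall>t. admissible_block x H t (H t)"
proof (rule dependent_wellorder_choice)
  show "admissible_block x f t B = admissible_block x g t B"
    if "\<And>s. s < t \<Longrightarrow> f s = g s" for B f g t
  proof -
    have "\<Union>(f ` F) = \<Union>(g ` F)" if "F \<subseteq> {..<t}" for F
      using that \<open>\<And>s. s < t \<Longrightarrow> f s = g s\<close> by auto
    then show ?thesis
      using that by (simp add: admissible_block_def)
  qed
  show "\<exists>B. admissible_block x f t B"
    if "\<And>s. s < t \<Longrightarrow> admissible_block x f s (f s)" for f t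
    using that by (intro admissible_block_exists[OF wlc noid]) (simp add: admissible_block_def)
qed

lemma admissible_blocks_block_sequence:
  assumes "\<forall>t. admissible_block x H t (H t)"
  shows "block_sequence H"
proof -
  have "finite (H t) \<and> H t \<noteq> {} \<and> (\<forall>s<t. \<forall>a\<in>H s. \<forall>b\<in>H t. a < b)" for t
    using assms by (simp add: admissible_block_def)
  then show ?thesis
    unfolding block_sequence_def by blast
qed

lemma admissible_blocks_separate:
  assumes adm: "\<forall>t. admissible_block x H t (H t)"
    and "finite F1" "F1 \<noteq> {}" "finite F2" "F2 \<noteq> {}" "Max F1 \<noteq> Max F2"
  shows "ordered_sum x (\<Union>(H ` F1)) \<noteq> ordered_sum x (\<Union>(H ` F2))"
proof -
  have *: "ordered_sum x (\<Union>(H ` F)) \<noteq> ordered_sum x (\<Union>(H ` G))"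
    if "finite F" "F \<noteq> {}" "finite G" "G \<noteq> {}" "Max G < Max F" for F G
  proof -
    define t where "t = Max F"
    have "t \<in> F" "F - {t} \<subseteq> {..<t}"
      using that by (auto simp: t_def less_le)
    moreover have "G \<subseteq> {..<t}"
      using Max_ge[OF \<open>finite G\<close>] \<open>Max G < Max F\<close> by (fastforce simp: t_def)
    moreover have "\<Union>(H ` F) = \<Union>(H ` (F - {t})) \<union> H t"
      using \<open>t \<in> F\<close> by blast
    ultimately show ?thesis
      using adm \<open>G \<noteq> {}\<close> by (simp add: admissible_block_def)
  qed
  show ?thesis
  proof (cases "Max F1 < Max F2")
    case True
    show ?thesis
      using *[OF assms(4,5,2,3) True] by (rule not_sym)
  next
    case False
    then have "Max F2 < Max F1" using \<open>Max F1 \<noteq> Max F2\<close> by simp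
    then show ?thesis
      using *[OF assms(2-5)] by blast
  qed
qed

lemma FS_block_subsequences_disjoint:
  assumes adm: "\<forall>t. admissible_block x H t (H t)"
    and "strict_mono e1" "strict_mono e2" "range e1 \<inter> range e2 = {}"
  shows "FS (\<lambda>n. ordered_sum x (H (e1 n))) \<inter> FS (\<lambda>n. ordered_sum x (H (e2 n))) = {}"
proof -
  have H: "block_sequence H"
    using adm by (rule admissible_blocks_block_sequence)
  have FS_e: "\<exists>F. finite F \<and> F \<noteq> {} \<and> F \<subseteq> range e \<and> v = ordered_sum x (\<Union>(H ` F))"
    if e: "strict_mono e" and v: "v \<in> FS (\<lambda>n. ordered_sum x (H (e n)))" for e v
  proof -
    obtain G where G: "finite G" "G \<noteq> {}" "v = ordered_sum x (\<Union>((\<lambda>n. H (e n)) ` G))"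
      using v unfolding FS_block_sums[OF block_sequence_comp_strict_mono[OF H e]] by blast
    have "v = ordered_sum x (\<Union>(H ` e ` G))"
      using G(3) by (simp add: image_image)
    moreover have "finite (e ` G)" "e ` G \<noteq> {}" "e ` G \<subseteq> range e"
      using G(1,2) by auto
    ultimately show ?thesis
      by blast
  qed
  show ?thesis
  proof (rule ccontr)
    assume "\<not> ?thesis"
    then obtain v where v1: "v \<in> FS (\<lambda>n. ordered_sum x (H (e1 n)))"
      and v2: "v \<in> FS (\<lambda>n. ordered_sum x (H (e2 n)))"
      by blast
    obtain F1 where F1: "finite F1" "F1 \<noteq> {}" "F1 \<subseteq> range e1" "v = ordered_sum x (\<Union>(H ` F1))"
      using FS_e[OF assms(2) v1] by blast
    obtain F2 where F2: "finite F2" "F2 \<noteq> {}" "F2 \<subseteq> range e2" "v = ordered_sum x (\<Union>(H ` F2))"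
      using FS_e[OF assms(3) v2] by blast
    have "Max F1 \<in> range e1" "Max F2 \<in> range e2"
      using Max_in[OF F1(1,2)] Max_in[OF F2(1,2)] F1(3) F2(3) by blast+
    then have "Max F1 \<noteq> Max F2"
      using assms(4) by (metis IntI empty_iff)
    then show False
      using admissible_blocks_separate[OF adm F1(1,2) F2(1,2)] F1(4) F2(4) by simp
  qed
qed

lemma IP_set_mono: "IP_set A \<Longrightarrow> A \<subseteq> B \<Longrightarrow> IP_set B"
  by (auto simp: IP_set_def)

lemma IP_partition_of_disjoint_IP_subsets:
  fixes A :: "'a::semigroup_add set" and B :: "nat \<Rightarrow> 'a set"
  assumes sub: "\<And>k. B k \<subseteq> A" and IP: "\<And>k. IP_set (B k)"
    and disj: "\<And>k j. k \<noteq> j \<Longrightarrow> B k \<inter> B j = {}"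
  shows "\<exists>P :: nat \<Rightarrow> 'a set. (\<Union>n. P n) = A \<and> (\<forall>m n. m \<noteq> n \<longrightarrow> P m \<inter> P n = {})
           \<and> (\<forall>n. IP_set (P n))"
proof -
  define P where "P n = (if n = 0 then A - (\<Union>k. B (Suc k)) else B n)" for n
  have "B 0 \<subseteq> P 0"
    using sub disj[of 0 "Suc _"] by (auto simp: P_def)
  then have "IP_set (P n)" for n
    using IP IP_set_mono[of "B 0"] by (cases n) (auto simp: P_def)
  moreover have "(\<Union>n. P n) = A"
    using sub by (auto simp: P_def)
  moreover have "P m \<inter> P n = {}" if "m \<noteq> n" for m n
    using disj that by (cases m; cases n) (auto simp: P_def)
  ultimately show ?thesis by blast
qed

lemma strict_mono_prod_encode: "strict_mono (\<lambda>n. prod_encode (k, n))"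
  by (simp add: strict_mono_Suc_iff prod_encode_def)

theorem theorem2p1:
  fixes A :: "'a::semigroup_add set"
  assumes "infinite (UNIV :: 'a set)"
    and "left_weakly_cancellative TYPE('a)"
    and "\<forall>e::'a. e + e \<noteq> e"
    and "IP_set A"
  shows "\<exists>P :: nat \<Rightarrow> 'a set. (\<Union>n. P n) = A \<and> (\<forall>m n. m \<noteq> n \<longrightarrow> P m \<inter> P n = {})
           \<and> (\<forall>n. IP_set (P n))"
proof -
  obtain x where x: "FS x \<subseteq> A"
    using assms(4) by (auto simp: IP_set_def)
  obtain H where adm: "\<forall>t. admissible_block x H t (H t)"
    using admissible_blocks_exist[OF assms(2,3)] by blast
  then have H: "block_sequence H"
    by (rule admissible_blocks_block_sequence)
  define B where "B k = FS (\<lambda>n. ordered_sum x (H (prod_encode (k, n))))" for k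
  show ?thesis
  proof (rule IP_partition_of_disjoint_IP_subsets)
    show "B k \<subseteq> A" for k
      using FS_block_sums_subset[OF block_sequence_comp_strict_mono[OF H strict_mono_prod_encode]] x
      by (auto simp: B_def)
    show "IP_set (B k)" for k
      by (auto simp: B_def IP_set_def)
    show "B k \<inter> B j = {}" if "k \<noteq> j" for k j
      unfolding B_def using that
      by (intro FS_block_subsequences_disjoint[OF adm strict_mono_prod_encode strict_mono_prod_encode])
        auto
  qed
qed

end
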